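(* Consider the Normal Partizan Domination game on a star $K_{1,n}$ whose universal (center) vertex has color $A$, with $a$ leaves of color $A$, $b$ leaves of color $B$ and $c=n-a-b\geq 1$ leaves of color $C$. If $a=0$, the value is $(n-1)\cdot\uparrow$ if $n$ is even and $(n-1)\cdot\uparrow*$ if $n$ is odd. If $a>0$, the value is $J$ if $c$ is even and $J*$ if $c$ is odd, where $J$ is the value of the game on the star obtained by removing the $c$ leaves of color $C$ (keeping all other colors). If instead the universal vertex has color $B$, the value is $-J'$, where $J'$ is the value of the game obtained by interchanging the colors $A$ and $B$ on all vertices.
   Context: Normal Partizan Domination game: a finite graph $G$ has each vertex colored $A$, $B$ or $C$. Alice and Bob alternately select a vertex; Alice may only select vertices colored $A$ or $C$, Bob only vertices colored $B$ or $C$. A vertex $u$ dominates $v$ if $u=v$ or $uv$ is an edge. A vertex may be selected only if it is playable, i.e. it dominates at least one vertex not dominated by the previously selected vertices; the game ends when the selected vertices form a dominating set. Under normal play the player unable to move loses. The game is regarded as a partizan combinatorial game with Alice as Left and Bob as Right, and its value is its value in Conway's combinatorial game theory ($\{X\mid Y\}$ has Left options $X$ and Right options $Y$; $G+H$ is the disjunctive sum; $-G$ swaps Left and Right; $G=H$ iff $G+(-H)$ is a second-player win). Notation: $*=\{0\mid 0\}$; $\uparrow=\{0\mid *\}$; $m\cdot\uparrow$ is the sum of $m$ copies of $\uparrow$ (and $0\cdot\uparrow=0$); $J*$ denotes $J+*$. *)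

theory Defs
  imports Main
begin

datatype game = Game "game list" "game list"

fun leftopts :: "game \<Rightarrow> game list" where "leftopts (Game L R) = L"
fun rightopts :: "game \<Rightarrow> game list" where "rightopts (Game L R) = R"

fun gneg :: "game \<Rightarrow> game" where
  "gneg (Game L R) = Game (map gneg R) (map gneg L)"

function gplus :: "game \<Rightarrow> game \<Rightarrow> game" where
  "gplus (Game L R) (Game L' R') =
     Game (map (\<lambda>x. gplus x (Game L' R')) L @ map (\<lambda>y. gplus (Game L R) y) L')
          (map (\<lambda>x. gplus x (Game L' R')) R @ map (\<lambda>y. gplus (Game L R) y) R')"
  by pat_completeness auto
termination
  by (relation "measure (\<lambda>(g, h). size g + size h)")
     (auto dest!: size_list_estimation'[OF _ order.refl, of _ _ size])

fun lwins_first :: "game \<Rightarrow> bool" and rwins_first :: "game \<Rightarrow> bool" where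
  "lwins_first (Game L R) = (\<exists>x\<in>set L. \<not> rwins_first x)"
| "rwins_first (Game L R) = (\<exists>x\<in>set R. \<not> lwins_first x)"

definition second_player_win :: "game \<Rightarrow> bool" where
  "second_player_win G \<longleftrightarrow> \<not> lwins_first G \<and> \<not> rwins_first G"

definition game_eq :: "game \<Rightarrow> game \<Rightarrow> bool" (infix "=\<^sub>g" 50) where
  "G =\<^sub>g H \<longleftrightarrow> second_player_win (gplus G (gneg H))"

definition gzero :: game where "gzero = Game [] []"
definition gstar :: game where "gstar = Game [gzero] [gzero]"
definition gup :: game where "gup = Game [gzero] [gstar]"

fun up_times :: "nat \<Rightarrow> game" where
  "up_times 0 = gzero"
| "up_times (Suc m) = gplus gup (up_times m)"

datatype color = CA | CB | CC

text \<open>Graph: finite vertex set V of naturals, symmetric adjacency E.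
  Closed neighbourhood of v inside V.\<close>
definition cnbhd :: "nat set \<Rightarrow> (nat \<Rightarrow> nat \<Rightarrow> bool) \<Rightarrow> nat \<Rightarrow> nat set" where
  "cnbhd V E v = {u \<in> V. u = v \<or> E v u}"

text \<open>v is playable when D is the set of already dominated vertices.\<close>
definition playable :: "nat set \<Rightarrow> (nat \<Rightarrow> nat \<Rightarrow> bool) \<Rightarrow> nat set \<Rightarrow> nat \<Rightarrow> bool" where
  "playable V E D v \<longleftrightarrow> v \<in> V \<and> \<not> cnbhd V E v \<subseteq> D"

definition alice_col :: "color \<Rightarrow> bool" where "alice_col c \<longleftrightarrow> c = CA \<or> c = CC"
definition bob_col :: "color \<Rightarrow> bool" where "bob_col c \<longleftrightarrow> c = CB \<or> c = CC"

text \<open>Game tree from position D (dominated set), with fuel k.  Every move dominates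
  at least one new vertex, so fuel card V never runs out before the game ends.\<close>
fun dgame_aux :: "nat \<Rightarrow> nat set \<Rightarrow> (nat \<Rightarrow> nat \<Rightarrow> bool) \<Rightarrow> (nat \<Rightarrow> color) \<Rightarrow> nat set \<Rightarrow> game" where
  "dgame_aux 0 V E col D = Game [] []"
| "dgame_aux (Suc k) V E col D =
     Game (map (\<lambda>v. dgame_aux k V E col (D \<union> cnbhd V E v))
             (filter (\<lambda>v. alice_col (col v) \<and> playable V E D v) (sorted_list_of_set V)))
          (map (\<lambda>v. dgame_aux k V E col (D \<union> cnbhd V E v))
             (filter (\<lambda>v. bob_col (col v) \<and> playable V E D v) (sorted_list_of_set V)))"

definition dom_game :: "nat set \<Rightarrow> (nat \<Rightarrow> nat \<Rightarrow> bool) \<Rightarrow> (nat \<Rightarrow> color) \<Rightarrow> game" where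
  "dom_game V E col = dgame_aux (card V) V E col {}"

text \<open>Star K_{1,n}: vertex 0 is the centre, vertices 1..n the leaves.\<close>
definition star_edge :: "nat \<Rightarrow> nat \<Rightarrow> bool" where
  "star_edge u v \<longleftrightarrow> (u = 0 \<and> v \<noteq> 0) \<or> (v = 0 \<and> u \<noteq> 0)"

definition swapAB :: "color \<Rightarrow> color" where
  "swapAB c = (case c of CA \<Rightarrow> CB | CB \<Rightarrow> CA | CC \<Rightarrow> CC)"

end

theory Submission
  imports Defs
begin

text \<open>
  After the first move the centre of the star is dominated, and with an A-coloured centre the
  remaining game depends only on the numbers a, b, c of undominated leaves of colours A, B, C:
  Alice may end the game by taking the centre (a move to 0) or take one of her leaves, Bob may
  only take one of his leaves.

  If a > 0, every C-leaf splits off as a star: S(a,b,c) = S(a,b,c-1) + *, by induction on b + c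
  from the inequalities 0 <= S(a,b,c), * <= S(a,b,c), S(a,b,c) <= S(a+1,b,c+1) and
  S(a,b,c) <= S(a+1,b,c-1). Since * + * = 0 this gives J or J*.

  If a = 0, Alice's C-moves are never better than taking the centre, and S(0,b,c) = P_n where
  P_0 = 0 and P_(k+1) = {0 | P_k}. The outcomes of all sums P_p + i.down + j.* have a closed
  form, proved by induction, and P_n + (n-1).down (+ *) turns out to be a second-player win.

  A B-coloured centre is the mirror image: exchanging A and B negates the game.
\<close>

section \<open>Conway's order on games\<close>

lemma size_leftopts: "x \<in> set (leftopts G) \<Longrightarrow> size x < size G"
  by (cases G) (auto dest: size_list_estimation'[OF _ order.refl, of _ _ size])

lemma size_rightopts: "x \<in> set (rightopts G) \<Longrightarrow> size x < size G"
  by (cases G) (auto dest: size_list_estimation'[OF _ order.refl, of _ _ size])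

instantiation game :: preorder
begin

function less_eq_game :: "game \<Rightarrow> game \<Rightarrow> bool" where
  "less_eq_game (Game GL GR) (Game HL HR) \<longleftrightarrow>
     (\<forall>x\<in>set GL. \<not> less_eq_game (Game HL HR) x) \<and> (\<forall>y\<in>set HR. \<not> less_eq_game y (Game GL GR))"
  by pat_completeness auto
termination
  by (relation "measure (\<lambda>(G, H). size G + size H)")
     (auto dest!: size_list_estimation'[OF _ order.refl, of _ _ size])

definition less_game :: "game \<Rightarrow> game \<Rightarrow> bool" where
  "less_game G H \<longleftrightarrow> G \<le> H \<and> \<not> H \<le> G"

lemma game_le_iff:
  "G \<le> H \<longleftrightarrow> (\<forall>x\<in>set (leftopts G). \<not> H \<le> x) \<and> (\<forall>y\<in>set (rightopts H). \<not> y \<le> G)"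
  by (cases G; cases H) simp

lemma game_le_leftoptD: "G \<le> H \<Longrightarrow> x \<in> set (leftopts G) \<Longrightarrow> \<not> H \<le> x"
  using game_le_iff[of G H] by blast

lemma game_le_rightoptD: "G \<le> H \<Longrightarrow> y \<in> set (rightopts H) \<Longrightarrow> \<not> y \<le> G"
  using game_le_iff[of G H] by auto

lemma game_le_refl: "G \<le> (G :: game)"
proof (induction G rule: measure_induct_rule[of size])
  case (less G)
  then show ?case
    unfolding game_le_iff[of G G]
    by (meson game_le_leftoptD game_le_rightoptD size_leftopts size_rightopts)
qed

lemma game_le_trans: "G \<le> H \<Longrightarrow> H \<le> K \<Longrightarrow> G \<le> (K :: game)"
proof (induction "size G + size H + size K" arbitrary: G H K rule: less_induct)
  case less
  show ?case
    unfolding game_le_iff[of G K]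
  proof safe
    fix x assume x: "x \<in> set (leftopts G)" and "K \<le> x"
    moreover have "size H + size K + size x < size G + size H + size K"
      using size_leftopts[OF x] by simp
    ultimately have "H \<le> x" using less by blast
    then show False using game_le_leftoptD[OF less.prems(1) x] by blast
  next
    fix y assume y: "y \<in> set (rightopts K)" and "y \<le> G"
    moreover have "size y + size G + size H < size G + size H + size K"
      using size_rightopts[OF y] by simp
    ultimately have "y \<le> H" using less by blast
    then show False using game_le_rightoptD[OF less.prems(2) y] by blast
  qed
qed

instance
  by standard (auto simp: less_game_def intro: game_le_refl game_le_trans)

end

lemma game_leI:
  "(\<And>x. x \<in> set (leftopts G) \<Longrightarrow> \<not> H \<le> x) \<Longrightarrow> (\<And>y. y \<in> set (rightopts H) \<Longrightarrow> \<not> y \<le> G)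
   \<Longrightarrow> G \<le> H"
  using game_le_iff[of G H] by blast

lemma not_game_le_leftoptI: "x \<in> set (leftopts G) \<Longrightarrow> H \<le> x \<Longrightarrow> \<not> G \<le> H"
  using game_le_leftoptD by blast

lemma not_game_le_rightoptI: "y \<in> set (rightopts H) \<Longrightarrow> y \<le> G \<Longrightarrow> \<not> G \<le> H"
  using game_le_rightoptD by blast

lemma not_game_leE:
  assumes "\<not> G \<le> H"
  obtains x where "x \<in> set (leftopts G)" "H \<le> x" | y where "y \<in> set (rightopts H)" "y \<le> G"
  using assms game_le_iff[of G H] by blast

lemma not_le_leftopt: "x \<in> set (leftopts G) \<Longrightarrow> \<not> G \<le> x"
  using not_game_le_leftoptI order_refl by blast

definition geqv :: "game \<Rightarrow> game \<Rightarrow> bool" (infix "\<approx>" 50) where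
  "G \<approx> H \<longleftrightarrow> G \<le> H \<and> H \<le> G"

lemma geqv_refl [simp]: "G \<approx> G"
  by (simp add: geqv_def)

lemma geqv_sym: "G \<approx> H \<Longrightarrow> H \<approx> G"
  by (simp add: geqv_def)

lemma geqv_trans [trans]: "G \<approx> H \<Longrightarrow> H \<approx> K \<Longrightarrow> G \<approx> K"
  unfolding geqv_def using order_trans by blast

lemma geqv_imp_le: "G \<approx> H \<Longrightarrow> G \<le> H" and geqv_imp_ge: "G \<approx> H \<Longrightarrow> H \<le> G"
  by (simp_all add: geqv_def)

lemma le_geqv_trans [trans]: "G \<le> H \<Longrightarrow> H \<approx> K \<Longrightarrow> G \<le> K"
  and geqv_le_trans [trans]: "G \<approx> H \<Longrightarrow> H \<le> K \<Longrightarrow> G \<le> K"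
  unfolding geqv_def using order_trans by blast+

lemma geqv_optionsI:
  assumes "rel_set (\<approx>) (set (leftopts G)) (set (leftopts H))"
    and "rel_set (\<approx>) (set (rightopts G)) (set (rightopts H))"
  shows "G \<approx> H"
  unfolding geqv_def
proof (intro conjI game_leI)
  fix x assume "x \<in> set (leftopts G)"
  then obtain y where "y \<in> set (leftopts H)" "x \<approx> y" using assms(1) by (auto dest: rel_setD1)
  then show "\<not> H \<le> x" using not_game_le_leftoptI geqv_imp_le by blast
next
  fix y assume "y \<in> set (rightopts H)"
  then obtain x where "x \<in> set (rightopts G)" "x \<approx> y" using assms(2) by (auto dest: rel_setD2)
  then show "\<not> y \<le> G" using not_game_le_rightoptI geqv_imp_le by blast
next
  fix y assume "y \<in> set (leftopts H)"
  then obtain x where "x \<in> set (leftopts G)" "x \<approx> y" using assms(1) by (auto dest: rel_setD2)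
  then show "\<not> G \<le> y" using not_game_le_leftoptI geqv_imp_ge by blast
next
  fix x assume "x \<in> set (rightopts G)"
  then obtain y where "y \<in> set (rightopts H)" "x \<approx> y" using assms(2) by (auto dest: rel_setD1)
  then show "\<not> x \<le> H" using not_game_le_rightoptI geqv_imp_ge by blast
qed

lemma rel_set_mono_on:
  "rel_set R A B \<Longrightarrow> (\<And>x y. x \<in> A \<Longrightarrow> y \<in> B \<Longrightarrow> R x y \<Longrightarrow> S x y) \<Longrightarrow> rel_set S A B"
  unfolding rel_set_def by blast

lemma rel_set_image: "(\<And>x. x \<in> A \<Longrightarrow> R (f x) (g x)) \<Longrightarrow> rel_set R (f ` A) (g ` A)"
  unfolding rel_set_def by blast

lemma rel_set_insert: "R a b \<Longrightarrow> rel_set R A B \<Longrightarrow> rel_set R (insert a A) (insert b B)"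
  unfolding rel_set_def by blast

lemma geqv_bisimulation:
  assumes "R G H"
    and bisim: "\<And>G H. R G H \<Longrightarrow> rel_set R (set (leftopts G)) (set (leftopts H))
      \<and> rel_set R (set (rightopts G)) (set (rightopts H))"
  shows "G \<approx> H"
  using \<open>R G H\<close>
proof (induction "size G + size H" arbitrary: G H rule: less_induct)
  case less
  have IH: "R x y \<Longrightarrow> x \<approx> y"
    if "x \<in> set (leftopts G) \<and> y \<in> set (leftopts H) \<or> x \<in> set (rightopts G) \<and> y \<in> set (rightopts H)"
    for x y
    using that less.hyps size_leftopts size_rightopts by (meson add_strict_mono)
  show ?case
    using bisim[OF less.prems] IH
    by (intro geqv_optionsI) (auto elim!: rel_set_mono_on)
qed

lemma set_leftopts_gplus [simp]:
  "set (leftopts (gplus G H)) = (\<lambda>x. gplus x H) ` set (leftopts G) \<union> gplus G ` set (leftopts H)"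
  by (cases G; cases H) auto

lemma set_rightopts_gplus [simp]:
  "set (rightopts (gplus G H)) = (\<lambda>x. gplus x H) ` set (rightopts G) \<union> gplus G ` set (rightopts H)"
  by (cases G; cases H) auto

lemma set_leftopts_gneg [simp]: "set (leftopts (gneg G)) = gneg ` set (rightopts G)"
  by (cases G) auto

lemma set_rightopts_gneg [simp]: "set (rightopts (gneg G)) = gneg ` set (leftopts G)"
  by (cases G) auto

lemma gplus_commute: "gplus G H \<approx> gplus H G"
  by (rule geqv_bisimulation[where R = "\<lambda>X Y. \<exists>G H. X = gplus G H \<and> Y = gplus H G"])
     (unfold rel_set_def, fastforce+)

lemma gplus_assoc: "gplus (gplus G H) K \<approx> gplus G (gplus H K)"
  by (rule geqv_bisimulation
      [where R = "\<lambda>X Y. \<exists>G H K. X = gplus (gplus G H) K \<and> Y = gplus G (gplus H K)"])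
     (unfold rel_set_def, fastforce+)

lemma gplus_gzero: "gplus G gzero \<approx> G"
  by (rule geqv_bisimulation[where R = "\<lambda>X Y. X = gplus Y gzero"])
     (unfold rel_set_def, auto simp: gzero_def)

lemma gplus_mono_left: "G \<le> H \<Longrightarrow> gplus G K \<le> gplus H K"
proof (induction "size G + size H + size K" arbitrary: G H K rule: less_induct)
  case less
  have IH: "gplus G' K' \<le> gplus H' K'"
    if "G' \<le> H'" "size G' + size H' + size K' < size G + size H + size K" for G' H' K'
    using less.hyps that by blast
  show ?case
  proof (rule game_leI)
    fix x assume "x \<in> set (leftopts (gplus G K))"
    then consider (G) g where "g \<in> set (leftopts G)" "x = gplus g K"
      | (K) k where "k \<in> set (leftopts K)" "x = gplus G k" by auto
    then show "\<not> gplus H K \<le> x"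
    proof cases
      case G
      have "\<not> H \<le> g" using game_le_leftoptD[OF less.prems G(1)] .
      then show ?thesis
      proof (cases rule: not_game_leE)
        case (1 h)
        have "gplus g K \<le> gplus h K"
          using IH[OF 1(2)] size_leftopts[OF G(1)] size_leftopts[OF 1(1)] by simp
        then show ?thesis using G(2) 1(1) not_game_le_leftoptI[of "gplus h K" "gplus H K"] by auto
      next
        case (2 g')
        have "gplus g' K \<le> gplus H K"
          using IH[OF 2(2)] size_leftopts[OF G(1)] size_rightopts[OF 2(1)] by simp
        then show ?thesis using G(2) 2(1) not_game_le_rightoptI[of "gplus g' K" "gplus g K"] by auto
      qed
    next
      case K
      have "gplus G k \<le> gplus H k" using IH[OF less.prems] size_leftopts[OF K(1)] by simp
      then show ?thesis using K not_game_le_leftoptI[of "gplus H k" "gplus H K"] by auto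
    qed
  next
    fix y assume "y \<in> set (rightopts (gplus H K))"
    then consider (H) h where "h \<in> set (rightopts H)" "y = gplus h K"
      | (K) k where "k \<in> set (rightopts K)" "y = gplus H k" by auto
    then show "\<not> y \<le> gplus G K"
    proof cases
      case H
      have "\<not> h \<le> G" using game_le_rightoptD[OF less.prems H(1)] .
      then show ?thesis
      proof (cases rule: not_game_leE)
        case (1 h')
        have "gplus G K \<le> gplus h' K"
          using IH[OF 1(2)] size_rightopts[OF H(1)] size_leftopts[OF 1(1)] by simp
        then show ?thesis using H(2) 1(1) not_game_le_leftoptI[of "gplus h' K" "gplus h K"] by auto
      next
        case (2 g)
        have "gplus g K \<le> gplus h K"
          using IH[OF 2(2)] size_rightopts[OF H(1)] size_rightopts[OF 2(1)] by simp
        then show ?thesis using H(2) 2(1) not_game_le_rightoptI[of "gplus g K" "gplus G K"] by auto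
      qed
    next
      case K
      have "gplus G k \<le> gplus H k" using IH[OF less.prems] size_rightopts[OF K(1)] by simp
      then show ?thesis using K not_game_le_rightoptI[of "gplus G k" "gplus G K"] by auto
    qed
  qed
qed

lemma gplus_mono_right: "G \<le> H \<Longrightarrow> gplus K G \<le> gplus K H"
proof -
  assume "G \<le> H"
  have "gplus K G \<approx> gplus G K" by (rule gplus_commute)
  also have "gplus G K \<le> gplus H K" using \<open>G \<le> H\<close> by (rule gplus_mono_left)
  also have "gplus H K \<approx> gplus K H" by (rule gplus_commute)
  finally show ?thesis .
qed

lemma gplus_cong: "G \<approx> H \<Longrightarrow> G' \<approx> H' \<Longrightarrow> gplus G G' \<approx> gplus H H'"
  unfolding geqv_def by (meson gplus_mono_left gplus_mono_right order_trans)

lemma gneg_gneg [simp]: "gneg (gneg G) = G"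
  by (induction G) (simp add: map_idI)

lemma gneg_gplus: "gneg (gplus G H) = gplus (gneg G) (gneg H)"
  by (induction G H rule: gplus.induct) simp

lemma gneg_le_gneg_iff: "gneg G \<le> gneg H \<longleftrightarrow> H \<le> G"
proof (induction "size G + size H" arbitrary: G H rule: less_induct)
  case less
  have "y \<in> set (rightopts G) \<Longrightarrow> gneg H \<le> gneg y \<longleftrightarrow> y \<le> H"
    and "x \<in> set (leftopts H) \<Longrightarrow> gneg x \<le> gneg G \<longleftrightarrow> G \<le> x" for x y
    using less size_leftopts size_rightopts by (metis add.commute add_strict_left_mono)+
  then show ?case
    unfolding game_le_iff[of "gneg G" "gneg H"] game_le_iff[of H G] by auto
qed

lemma le_gplus_gneg_gzero: "gplus G (gneg G) \<le> gzero"
proof (induction G rule: measure_induct_rule[of size])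
  case (less G)
  show ?case
  proof (rule game_leI)
    fix x assume "x \<in> set (leftopts (gplus G (gneg G)))"
    then consider g where "g \<in> set (leftopts G)" "x = gplus g (gneg G)"
      | g where "g \<in> set (rightopts G)" "x = gplus G (gneg g)" by auto
    then obtain g where "gplus g (gneg g) \<in> set (rightopts x)" "size g < size G"
      by cases (auto dest: size_leftopts size_rightopts)
    then show "\<not> gzero \<le> x" using less not_game_le_rightoptI by metis
  qed (simp add: gzero_def)
qed

lemma gplus_gneg: "gplus G (gneg G) \<approx> gzero"
proof -
  have "gneg (gplus (gneg G) (gneg (gneg G))) \<ge> gneg gzero"
    by (simp only: gneg_le_gneg_iff le_gplus_gneg_gzero)
  then show ?thesis
    using le_gplus_gneg_gzero by (simp add: geqv_def gneg_gplus gzero_def)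
qed

lemma gneg_gstar: "gneg gstar = gstar"
  by (simp add: gstar_def gzero_def)

lemma gplus_gstar_gstar: "gplus gstar gstar \<approx> gzero"
  using gplus_gneg[of gstar] by (simp add: gneg_gstar)

lemma gplus_gzero_opt_gplus_gstar:
  "gplus G gzero \<in> set (leftopts (gplus G gstar))" "gplus G gzero \<in> set (rightopts (gplus G gstar))"
  by (simp_all add: gstar_def)

lemma lwins_first_iff: "lwins_first G \<longleftrightarrow> (\<exists>x\<in>set (leftopts G). \<not> rwins_first x)"
  by (cases G) simp

lemma rwins_first_iff: "rwins_first G \<longleftrightarrow> (\<exists>x\<in>set (rightopts G). \<not> lwins_first x)"
  by (cases G) simp

lemma not_lwins_first_iff: "\<not> lwins_first G \<longleftrightarrow> G \<le> gzero"
  and not_rwins_first_iff: "\<not> rwins_first G \<longleftrightarrow> gzero \<le> G"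
proof (induction G)
  case (Game L R)
  have "Game L R \<le> gzero \<longleftrightarrow> (\<forall>x\<in>set L. \<not> gzero \<le> x)"
    and "gzero \<le> Game L R \<longleftrightarrow> (\<forall>y\<in>set R. \<not> y \<le> gzero)"
    by (simp_all add: gzero_def)
  with Game show "\<not> lwins_first (Game L R) \<longleftrightarrow> Game L R \<le> gzero"
    and "\<not> rwins_first (Game L R) \<longleftrightarrow> gzero \<le> Game L R" by auto
qed

lemma second_player_win_iff_geqv_gzero: "second_player_win G \<longleftrightarrow> G \<approx> gzero"
  by (simp add: second_player_win_def geqv_def not_lwins_first_iff not_rwins_first_iff)

lemma geqv_iff_gplus_gneg: "G \<approx> H \<longleftrightarrow> gplus G (gneg H) \<approx> gzero"
proof
  assume "G \<approx> H"
  then have "gplus G (gneg H) \<approx> gplus H (gneg H)" using geqv_refl by (rule gplus_cong)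
  also have "\<dots> \<approx> gzero" by (rule gplus_gneg)
  finally show "gplus G (gneg H) \<approx> gzero" .
next
  assume diff: "gplus G (gneg H) \<approx> gzero"
  have "G \<approx> gplus G gzero" by (rule geqv_sym, rule gplus_gzero)
  also have "\<dots> \<approx> gplus G (gplus (gneg H) H)"
  proof (rule gplus_cong)
    have "gplus (gneg H) H \<approx> gzero" using gplus_commute gplus_gneg by (rule geqv_trans)
    then show "gzero \<approx> gplus (gneg H) H" by (rule geqv_sym)
  qed (rule geqv_refl)
  also have "\<dots> \<approx> gplus (gplus G (gneg H)) H" by (rule geqv_sym, rule gplus_assoc)
  also have "\<dots> \<approx> gplus gzero H" using diff geqv_refl by (rule gplus_cong)
  also have "\<dots> \<approx> H" using gplus_commute gplus_gzero by (rule geqv_trans)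
  finally show "G \<approx> H" .
qed

lemma game_eq_iff_geqv: "G =\<^sub>g H \<longleftrightarrow> G \<approx> H"
  by (simp only: game_eq_def second_player_win_iff_geqv_gzero geqv_iff_gplus_gneg[of G H])

section \<open>Sums of P_p, downs and stars\<close>

text \<open>
  ladder p i j is P_p + i.down + j.*, where P_0 = 0 and P_(p+1) = {0 | P_p}.
  As down = {* | 0}, Left's move in a down leaves a star behind.
\<close>

function ladder :: "nat \<Rightarrow> nat \<Rightarrow> nat \<Rightarrow> game" where
  "ladder p i j = Game
     ((if 0 < p then [ladder 0 i j] else []) @ (if 0 < i then [ladder p (i - 1) (Suc j)] else [])
        @ (if 0 < j then [ladder p i (j - 1)] else []))
     ((if 0 < p then [ladder (p - 1) i j] else []) @ (if 0 < i then [ladder p (i - 1) j] else [])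
        @ (if 0 < j then [ladder p i (j - 1)] else []))"
  by pat_completeness auto
termination by (relation "measure (\<lambda>(p, i, j). p + 2 * i + j)") auto

declare ladder.simps [simp del]

lemma ladder_leftopts:
  "x \<in> set (leftopts (ladder p i j)) \<longleftrightarrow>
     0 < p \<and> x = ladder 0 i j \<or> 0 < i \<and> x = ladder p (i - 1) (Suc j)
     \<or> 0 < j \<and> x = ladder p i (j - 1)"
  by (subst ladder.simps) auto

lemma ladder_rightopts:
  "x \<in> set (rightopts (ladder p i j)) \<longleftrightarrow>
     0 < p \<and> x = ladder (p - 1) i j \<or> 0 < i \<and> x = ladder p (i - 1) j
     \<or> 0 < j \<and> x = ladder p i (j - 1)"
  by (subst ladder.simps) auto

definition ladder_merge :: "game \<Rightarrow> game \<Rightarrow> bool" where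
  "ladder_merge X Y \<longleftrightarrow>
     (\<exists>p i j k l. X = gplus (ladder p i j) (ladder 0 k l) \<and> Y = ladder p (i + k) (j + l))"

lemma ladder_mergeI:
  "i' = i + k \<Longrightarrow> j' = j + l \<Longrightarrow> ladder_merge (gplus (ladder p i j) (ladder 0 k l)) (ladder p i' j')"
  unfolding ladder_merge_def by blast

lemma ladder_merge_leftopts:
  "rel_set ladder_merge (set (leftopts (gplus (ladder p i j) (ladder 0 k l))))
     (set (leftopts (ladder p (i + k) (j + l))))"
proof (rule rel_setI)
  fix x assume "x \<in> set (leftopts (gplus (ladder p i j) (ladder 0 k l)))"
  then consider "0 < p" "x = gplus (ladder 0 i j) (ladder 0 k l)"
    | "0 < i" "x = gplus (ladder p (i - 1) (Suc j)) (ladder 0 k l)"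
    | "0 < j" "x = gplus (ladder p i (j - 1)) (ladder 0 k l)"
    | "0 < k" "x = gplus (ladder p i j) (ladder 0 (k - 1) (Suc l))"
    | "0 < l" "x = gplus (ladder p i j) (ladder 0 k (l - 1))"
    by (auto simp: ladder_leftopts)
  then show "\<exists>y\<in>set (leftopts (ladder p (i + k) (j + l))). ladder_merge x y"
    by cases (fastforce simp: ladder_leftopts intro: ladder_mergeI)+
next
  fix y assume "y \<in> set (leftopts (ladder p (i + k) (j + l)))"
  then consider "0 < p" "y = ladder 0 (i + k) (j + l)"
    | i' where "i = Suc i'" "y = ladder p (i' + k) (Suc (j + l))"
    | k' where "k = Suc k'" "y = ladder p (i + k') (Suc (j + l))"
    | j' where "j = Suc j'" "y = ladder p (i + k) (j' + l)"
    | l' where "l = Suc l'" "y = ladder p (i + k) (j + l')"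
    unfolding ladder_leftopts by (cases i; cases j) (auto simp: gr0_conv_Suc)
  then show "\<exists>x\<in>set (leftopts (gplus (ladder p i j) (ladder 0 k l))). ladder_merge x y"
  proof cases
    case 1
    then show ?thesis
      by (intro bexI[of _ "gplus (ladder 0 i j) (ladder 0 k l)"])
        (auto simp: ladder_leftopts intro: ladder_mergeI)
  next
    case (2 i')
    then show ?thesis
      by (intro bexI[of _ "gplus (ladder p i' (Suc j)) (ladder 0 k l)"])
        (auto simp: ladder_leftopts intro: ladder_mergeI)
  next
    case (3 k')
    then show ?thesis
      by (intro bexI[of _ "gplus (ladder p i j) (ladder 0 k' (Suc l))"])
        (auto simp: ladder_leftopts intro: ladder_mergeI)
  next
    case (4 j')
    then show ?thesis
      by (intro bexI[of _ "gplus (ladder p i j') (ladder 0 k l)"])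
        (auto simp: ladder_leftopts intro: ladder_mergeI)
  next
    case (5 l')
    then show ?thesis
      by (intro bexI[of _ "gplus (ladder p i j) (ladder 0 k l')"])
        (auto simp: ladder_leftopts intro: ladder_mergeI)
  qed
qed

lemma ladder_merge_rightopts:
  "rel_set ladder_merge (set (rightopts (gplus (ladder p i j) (ladder 0 k l))))
     (set (rightopts (ladder p (i + k) (j + l))))"
proof (rule rel_setI)
  fix x assume "x \<in> set (rightopts (gplus (ladder p i j) (ladder 0 k l)))"
  then consider "0 < p" "x = gplus (ladder (p - 1) i j) (ladder 0 k l)"
    | "0 < i" "x = gplus (ladder p (i - 1) j) (ladder 0 k l)"
    | "0 < j" "x = gplus (ladder p i (j - 1)) (ladder 0 k l)"
    | "0 < k" "x = gplus (ladder p i j) (ladder 0 (k - 1) l)"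
    | "0 < l" "x = gplus (ladder p i j) (ladder 0 k (l - 1))"
    by (auto simp: ladder_rightopts)
  then show "\<exists>y\<in>set (rightopts (ladder p (i + k) (j + l))). ladder_merge x y"
    by cases (fastforce simp: ladder_rightopts intro: ladder_mergeI)+
next
  fix y assume "y \<in> set (rightopts (ladder p (i + k) (j + l)))"
  then consider p' where "p = Suc p'" "y = ladder p' (i + k) (j + l)"
    | i' where "i = Suc i'" "y = ladder p (i' + k) (j + l)"
    | k' where "k = Suc k'" "y = ladder p (i + k') (j + l)"
    | j' where "j = Suc j'" "y = ladder p (i + k) (j' + l)"
    | l' where "l = Suc l'" "y = ladder p (i + k) (j + l')"
    unfolding ladder_rightopts by (cases i; cases j) (auto simp: gr0_conv_Suc)
  then show "\<exists>x\<in>set (rightopts (gplus (ladder p i j) (ladder 0 k l))). ladder_merge x y"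
    by cases (fastforce simp: ladder_rightopts intro: ladder_mergeI)+
qed

lemma gplus_ladder: "gplus (ladder p i j) (ladder 0 k l) \<approx> ladder p (i + k) (j + l)"
proof (rule geqv_bisimulation[where R = ladder_merge])
  show "ladder_merge (gplus (ladder p i j) (ladder 0 k l)) (ladder p (i + k) (j + l))"
    by (rule ladder_mergeI) simp_all
next
  fix X Y assume "ladder_merge X Y"
  then show "rel_set ladder_merge (set (leftopts X)) (set (leftopts Y))
      \<and> rel_set ladder_merge (set (rightopts X)) (set (rightopts Y))"
    using ladder_merge_leftopts ladder_merge_rightopts by (auto simp: ladder_merge_def)
qed

lemma ladder_000: "ladder 0 0 0 = gzero"
  by (simp add: ladder.simps gzero_def)

lemma ladder_001: "ladder 0 0 1 = gstar"
  by (subst ladder.simps) (simp add: ladder_000 gstar_def)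

lemma ladder_010: "ladder 0 1 0 = gneg gup"
  by (subst ladder.simps)
    (simp add: ladder_000 ladder_001[unfolded One_nat_def] gup_def gstar_def gzero_def)

lemma gneg_up_times: "gneg (up_times m) \<approx> ladder 0 m 0"
proof (induction m)
  case 0
  show ?case by (simp add: ladder_000 gzero_def)
next
  case (Suc m)
  have "gneg (up_times (Suc m)) = gplus (ladder 0 1 0) (gneg (up_times m))"
    unfolding ladder_010 by (simp add: gneg_gplus)
  also have "\<dots> \<approx> gplus (ladder 0 1 0) (ladder 0 m 0)"
    using geqv_refl Suc.IH by (rule gplus_cong)
  also have "\<dots> \<approx> ladder 0 (Suc m) 0"
    using gplus_ladder[of 0 1 0 m 0] by simp
  finally show ?case .
qed

text \<open>
  For p > 0, P_p = (p - 1).up + [p odd].*, so a ladder is (ladder_ups p i).up + (p + j).*.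
  Moving first, Left wins k.up + e.* iff k >= 1, or e is odd and k >= -1; symmetrically for Right.
\<close>

definition ladder_ups :: "nat \<Rightarrow> nat \<Rightarrow> int" where
  "ladder_ups p i = (if p = 0 then 0 else int p - 1) - int i"

definition ladder_lwins :: "nat \<Rightarrow> nat \<Rightarrow> nat \<Rightarrow> bool" where
  "ladder_lwins p i j \<longleftrightarrow> ladder_ups p i \<ge> 1 \<or> odd (p + j) \<and> ladder_ups p i \<ge> -1"

definition ladder_rwins :: "nat \<Rightarrow> nat \<Rightarrow> nat \<Rightarrow> bool" where
  "ladder_rwins p i j \<longleftrightarrow> ladder_ups p i \<le> -1 \<or> odd (p + j) \<and> ladder_ups p i \<le> 1"

lemma ladder_lwins_rec:
  "ladder_lwins p i j \<longleftrightarrow> 0 < p \<and> \<not> ladder_rwins 0 i j \<or> 0 < i \<and> \<not> ladder_rwins p (i - 1) (Suc j)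
     \<or> 0 < j \<and> \<not> ladder_rwins p i (j - 1)"
  unfolding ladder_lwins_def ladder_rwins_def ladder_ups_def
  by (cases "p = 0"; cases "i = 0"; cases "j = 0"; simp; presburger)

lemma ladder_rwins_rec:
  "ladder_rwins p i j \<longleftrightarrow> 0 < p \<and> \<not> ladder_lwins (p - 1) i j \<or> 0 < i \<and> \<not> ladder_lwins p (i - 1) j
     \<or> 0 < j \<and> \<not> ladder_lwins p i (j - 1)"
  unfolding ladder_lwins_def ladder_rwins_def ladder_ups_def
  by (cases "p = 0"; cases "p = 1"; cases "i = 0"; cases "j = 0"; simp; presburger)

lemma lwins_first_ladder: "lwins_first (ladder p i j) \<longleftrightarrow> ladder_lwins p i j"
  and rwins_first_ladder: "rwins_first (ladder p i j) \<longleftrightarrow> ladder_rwins p i j"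
proof (induction p i j rule: ladder.induct)
  case (1 p i j)
  have "lwins_first (ladder p i j) \<longleftrightarrow> 0 < p \<and> \<not> rwins_first (ladder 0 i j)
      \<or> 0 < i \<and> \<not> rwins_first (ladder p (i - 1) (Suc j))
      \<or> 0 < j \<and> \<not> rwins_first (ladder p i (j - 1))"
    unfolding lwins_first_iff[of "ladder p i j"] ladder_leftopts Bex_def by blast
  also have "\<dots> \<longleftrightarrow> ladder_lwins p i j"
    unfolding ladder_lwins_rec[of p i j] using "1.IH"
    by (cases "0 < p"; cases "0 < i"; cases "0 < j"; simp)
  finally show "lwins_first (ladder p i j) \<longleftrightarrow> ladder_lwins p i j" .
  have "rwins_first (ladder p i j) \<longleftrightarrow> 0 < p \<and> \<not> lwins_first (ladder (p - 1) i j)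
      \<or> 0 < i \<and> \<not> lwins_first (ladder p (i - 1) j) \<or> 0 < j \<and> \<not> lwins_first (ladder p i (j - 1))"
    unfolding rwins_first_iff[of "ladder p i j"] ladder_rightopts Bex_def by blast
  also have "\<dots> \<longleftrightarrow> ladder_rwins p i j"
    unfolding ladder_rwins_rec[of p i j] using "1.IH"
    by (cases "0 < p"; cases "0 < i"; cases "0 < j"; simp)
  finally show "rwins_first (ladder p i j) \<longleftrightarrow> ladder_rwins p i j" .
qed

lemma ladder_balanced_geqv_gzero: "0 < n \<Longrightarrow> even (n + j) \<Longrightarrow> ladder n (n - 1) j \<approx> gzero"
  unfolding second_player_win_iff_geqv_gzero[symmetric] second_player_win_def
  by (simp add: lwins_first_ladder rwins_first_ladder
      ladder_lwins_def ladder_rwins_def ladder_ups_def)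

lemma ladder_geqv_up_times: "0 < n \<Longrightarrow> even n \<Longrightarrow> ladder n 0 0 \<approx> up_times (n - 1)"
proof (subst geqv_iff_gplus_gneg)
  assume "0 < n" "even n"
  have "gplus (ladder n 0 0) (gneg (up_times (n - 1))) \<approx> gplus (ladder n 0 0) (ladder 0 (n - 1) 0)"
    using geqv_refl gneg_up_times by (rule gplus_cong)
  also have "\<dots> \<approx> ladder n (n - 1) 0"
    using gplus_ladder[of n 0 0 "n - 1" 0] by simp
  also have "\<dots> \<approx> gzero"
    using ladder_balanced_geqv_gzero[of n 0] \<open>0 < n\<close> \<open>even n\<close> by simp
  finally show "gplus (ladder n 0 0) (gneg (up_times (n - 1))) \<approx> gzero" .
qed

lemma ladder_geqv_up_times_star: "odd n \<Longrightarrow> ladder n 0 0 \<approx> gplus (up_times (n - 1)) gstar"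
proof (subst geqv_iff_gplus_gneg)
  assume "odd n"
  then have "0 < n" by presburger
  have "gneg (gplus (up_times (n - 1)) gstar) = gplus (gneg (up_times (n - 1))) (ladder 0 0 1)"
    by (simp only: gneg_gplus gneg_gstar ladder_001)
  also have "\<dots> \<approx> gplus (ladder 0 (n - 1) 0) (ladder 0 0 1)"
    using gneg_up_times geqv_refl by (rule gplus_cong)
  also have "\<dots> \<approx> ladder 0 (n - 1) 1"
    using gplus_ladder[of 0 "n - 1" 0 0 1] by simp
  finally have neg: "gneg (gplus (up_times (n - 1)) gstar) \<approx> ladder 0 (n - 1) 1" .
  have "gplus (ladder n 0 0) (gneg (gplus (up_times (n - 1)) gstar))
      \<approx> gplus (ladder n 0 0) (ladder 0 (n - 1) 1)"
    using geqv_refl neg by (rule gplus_cong)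
  also have "\<dots> \<approx> ladder n (n - 1) 1"
    using gplus_ladder[of n 0 0 "n - 1" 1] by simp
  also have "\<dots> \<approx> gzero"
    using ladder_balanced_geqv_gzero[of n 1] \<open>0 < n\<close> \<open>odd n\<close> by simp
  finally show "gplus (ladder n 0 0) (gneg (gplus (up_times (n - 1)) gstar)) \<approx> gzero" .
qed

lemma ladder_le_ladder_Suc_Suc: "ladder m 0 0 \<le> ladder (Suc (Suc m)) 0 0"
proof (induction m rule: less_induct)
  case (less m)
  show ?case
  proof (rule game_leI)
    fix x assume "x \<in> set (leftopts (ladder m 0 0))"
    then have "x \<in> set (leftopts (ladder (Suc (Suc m)) 0 0))" by (simp add: ladder_leftopts)
    then show "\<not> ladder (Suc (Suc m)) 0 0 \<le> x" by (rule not_le_leftopt)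
  next
    fix y assume "y \<in> set (rightopts (ladder (Suc (Suc m)) 0 0))"
    then have y: "y = ladder (Suc m) 0 0" by (simp add: ladder_rightopts)
    show "\<not> y \<le> ladder m 0 0"
    proof (cases m)
      case 0
      have "ladder m 0 0 \<in> set (leftopts y)" using y 0 by (simp add: ladder_leftopts)
      then show ?thesis by (rule not_le_leftopt)
    next
      case (Suc m')
      have "ladder m' 0 0 \<in> set (rightopts (ladder m 0 0))"
        using Suc by (simp add: ladder_rightopts)
      moreover have "ladder m' 0 0 \<le> y" using less Suc y by simp
      ultimately show ?thesis by (rule not_game_le_rightoptI)
    qed
  qed
qed

lemma not_ladder_Suc_le_ladder: "\<not> ladder (Suc m) 0 0 \<le> ladder m 0 0"
proof (cases m)
  case 0
  have "ladder m 0 0 \<in> set (leftopts (ladder (Suc m) 0 0))" using 0 by (simp add: ladder_leftopts)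
  then show ?thesis by (rule not_le_leftopt)
next
  case (Suc m')
  have "ladder m' 0 0 \<in> set (rightopts (ladder m 0 0))" using Suc by (simp add: ladder_rightopts)
  moreover have "ladder m' 0 0 \<le> ladder (Suc m) 0 0"
    using ladder_le_ladder_Suc_Suc[of m'] Suc by simp
  ultimately show ?thesis by (rule not_game_le_rightoptI)
qed

section \<open>Star positions\<close>

text \<open>
  The position of the star game with an A-coloured, already dominated centre and a, b, c
  undominated leaves of colours A, B, C. The Left option 0 is Alice taking the centre.
\<close>

function star_position :: "nat \<Rightarrow> nat \<Rightarrow> nat \<Rightarrow> game" where
  "star_position a b c = (if a + b + c = 0 then gzero else
     Game (gzero # (if 0 < a then [star_position (a - 1) b c] else [])
             @ (if 0 < c then [star_position a b (c - 1)] else []))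
          ((if 0 < b then [star_position a (b - 1) c] else [])
             @ (if 0 < c then [star_position a b (c - 1)] else [])))"
  by pat_completeness auto
termination by (relation "measure (\<lambda>(a, b, c). a + b + c)") auto

declare star_position.simps [simp del]

lemma star_position_leftopts:
  "x \<in> set (leftopts (star_position a b c)) \<longleftrightarrow> 0 < a + b + c \<and>
     (x = gzero \<or> 0 < a \<and> x = star_position (a - 1) b c \<or> 0 < c \<and> x = star_position a b (c - 1))"
  by (subst star_position.simps) (auto simp: gzero_def)

lemma star_position_rightopts:
  "y \<in> set (rightopts (star_position a b c)) \<longleftrightarrow>
     0 < b \<and> y = star_position a (b - 1) c \<or> 0 < c \<and> y = star_position a b (c - 1)"
  by (subst star_position.simps) (auto simp: gzero_def)

lemma star_position_000: "star_position 0 0 0 = gzero"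
  by (simp add: star_position.simps)

lemma star_position_no_A_le_ladder:
  assumes "b + c = Suc m" and IH: "\<And>b' c'. b' + c' = m \<Longrightarrow> star_position 0 b' c' \<approx> ladder m 0 0"
  shows "star_position 0 b c \<le> ladder (Suc m) 0 0"
proof (rule game_leI)
  fix x assume "x \<in> set (leftopts (star_position 0 b c))"
  then consider "x = gzero" | "0 < c" "x = star_position 0 b (c - 1)"
    by (auto simp: star_position_leftopts)
  then show "\<not> ladder (Suc m) 0 0 \<le> x"
  proof cases
    case 1
    then have "x \<in> set (leftopts (ladder (Suc m) 0 0))" by (simp add: ladder_leftopts ladder_000)
    then show ?thesis by (rule not_le_leftopt)
  next
    case 2
    then have "x \<approx> ladder m 0 0" using IH assms(1) by simp
    then show ?thesis using not_ladder_Suc_le_ladder by (meson geqv_imp_le order_trans)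
  qed
next
  fix y assume "y \<in> set (rightopts (ladder (Suc m) 0 0))"
  then have y: "y = ladder m 0 0" by (simp add: ladder_rightopts)
  obtain b' c' where opt: "star_position 0 b' c' \<in> set (rightopts (star_position 0 b c))"
    and "b' + c' = m"
  proof (cases "0 < b")
    case True
    then show ?thesis
      using assms(1) by (intro that[of "b - 1" c]) (simp_all add: star_position_rightopts)
  next
    case False
    then show ?thesis
      using assms(1) by (intro that[of b "c - 1"]) (simp_all add: star_position_rightopts)
  qed
  then have "star_position 0 b' c' \<le> y" using IH y geqv_imp_le by blast
  with opt show "\<not> y \<le> star_position 0 b c" by (rule not_game_le_rightoptI)
qed

lemma ladder_le_star_position_no_A:
  assumes "b + c = Suc m" and IH: "\<And>b' c'. b' + c' = m \<Longrightarrow> star_position 0 b' c' \<approx> ladder m 0 0"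
  shows "ladder (Suc m) 0 0 \<le> star_position 0 b c"
proof (rule game_leI)
  fix x assume "x \<in> set (leftopts (ladder (Suc m) 0 0))"
  then have "x \<in> set (leftopts (star_position 0 b c))"
    using assms(1) by (simp add: ladder_leftopts ladder_000 star_position_leftopts)
  then show "\<not> star_position 0 b c \<le> x" by (rule not_le_leftopt)
next
  fix y assume "y \<in> set (rightopts (star_position 0 b c))"
  then have "ladder m 0 0 \<le> y"
    using IH assms(1) geqv_imp_ge by (auto simp: star_position_rightopts)
  moreover have "ladder m 0 0 \<in> set (rightopts (ladder (Suc m) 0 0))"
    by (simp add: ladder_rightopts)
  ultimately show "\<not> y \<le> ladder (Suc m) 0 0" by (intro not_game_le_rightoptI)
qed

lemma star_position_no_A: "star_position 0 b c \<approx> ladder (b + c) 0 0"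
proof (induction "b + c" arbitrary: b c)
  case 0
  then show ?case by (simp add: star_position_000 ladder_000)
next
  case (Suc m)
  then have IH: "star_position 0 b' c' \<approx> ladder m 0 0" if "b' + c' = m" for b' c'
    using that by metis
  show ?case
    unfolding geqv_def \<open>Suc m = b + c\<close>[symmetric]
    using star_position_no_A_le_ladder[OF Suc.hyps(2)[symmetric] IH]
      ladder_le_star_position_no_A[OF Suc.hyps(2)[symmetric] IH] by blast
qed

lemma star_position_no_A_value:
  assumes "0 < n" "b + c = n"
  shows "star_position 0 b c
    \<approx> (if even n then up_times (n - 1) else gplus (up_times (n - 1)) gstar)"
proof -
  have "star_position 0 b c \<approx> ladder n 0 0" using star_position_no_A[of b c] assms(2) by simp
  also have "\<dots> \<approx> (if even n then up_times (n - 1) else gplus (up_times (n - 1)) gstar)"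
    using ladder_geqv_up_times[OF assms(1)] ladder_geqv_up_times_star by simp
  finally show ?thesis .
qed

lemma gzero_le_star_position:
  assumes "0 < a" shows "gzero \<le> star_position a b c"
proof (rule game_leI)
  fix y assume "y \<in> set (rightopts (star_position a b c))"
  then obtain b' c' where "y = star_position a b' c'" by (auto simp: star_position_rightopts)
  then have "gzero \<in> set (leftopts y)" using assms by (simp add: star_position_leftopts)
  then show "\<not> y \<le> gzero" by (rule not_le_leftopt)
qed (simp add: gzero_def)

lemma gstar_le_star_position:
  assumes "0 < a" shows "gstar \<le> star_position a b c"
proof (rule game_leI)
  fix x assume "x \<in> set (leftopts gstar)"
  then have "x \<in> set (leftopts (star_position a b c))"
    using assms by (simp add: gstar_def star_position_leftopts)
  then show "\<not> star_position a b c \<le> x" by (rule not_le_leftopt)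
next
  fix y assume "y \<in> set (rightopts (star_position a b c))"
  then obtain b' c' where "y = star_position a b' c'" by (auto simp: star_position_rightopts)
  then have "gzero \<le> y" using assms by (simp add: gzero_le_star_position)
  moreover have "gzero \<in> set (rightopts gstar)" by (simp add: gstar_def)
  ultimately show "\<not> y \<le> gstar" by (rule not_game_le_rightoptI[rotated])
qed

lemma star_position_le_Suc_Suc: "star_position a b c \<le> star_position (Suc a) b (Suc c)"
proof (induction "a + b + c" arbitrary: a b c rule: less_induct)
  case less
  show ?case
  proof (rule game_leI)
    fix x assume "x \<in> set (leftopts (star_position a b c))"
    then consider "x = gzero" | "0 < a" "x = star_position (a - 1) b c"
      | "0 < c" "x = star_position a b (c - 1)"
      by (auto simp: star_position_leftopts)
    then show "\<not> star_position (Suc a) b (Suc c) \<le> x"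
    proof cases
      case 1
      then show ?thesis by (simp add: star_position_leftopts not_le_leftopt)
    next
      case 2
      have "star_position a b (Suc c) \<in> set (leftopts (star_position (Suc a) b (Suc c)))"
        by (simp add: star_position_leftopts)
      moreover have "x \<le> star_position a b (Suc c)" using less.hyps[of "a - 1" b c] 2 by simp
      ultimately show ?thesis by (rule not_game_le_leftoptI)
    next
      case 3
      have "star_position (Suc a) b c \<in> set (leftopts (star_position (Suc a) b (Suc c)))"
        by (simp add: star_position_leftopts)
      moreover have "x \<le> star_position (Suc a) b c" using less.hyps[of a b "c - 1"] 3 by simp
      ultimately show ?thesis by (rule not_game_le_leftoptI)
    qed
  next
    fix y assume "y \<in> set (rightopts (star_position (Suc a) b (Suc c)))"
    then consider "0 < b" "y = star_position (Suc a) (b - 1) (Suc c)"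
      | "y = star_position (Suc a) b c"
      by (auto simp: star_position_rightopts)
    then show "\<not> y \<le> star_position a b c"
    proof cases
      case 1
      have "star_position a (b - 1) c \<in> set (rightopts (star_position a b c))"
        using 1 by (simp add: star_position_rightopts)
      moreover have "star_position a (b - 1) c \<le> y" using less.hyps[of a "b - 1" c] 1 by simp
      ultimately show ?thesis by (rule not_game_le_rightoptI)
    next
      case 2
      show ?thesis
      proof (cases "0 < c")
        case True
        have "star_position a b (c - 1) \<in> set (rightopts (star_position a b c))"
          using True by (simp add: star_position_rightopts)
        moreover have "star_position a b (c - 1) \<le> y" using less.hyps[of a b "c - 1"] 2 True by simp
        ultimately show ?thesis by (rule not_game_le_rightoptI)
      next
        case False
        then have "star_position a b c \<in> set (leftopts y)"
          using 2 by (simp add: star_position_leftopts)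
        then show ?thesis by (rule not_le_leftopt)
      qed
    qed
  qed
qed

lemma star_position_le_C_to_A: "0 < c \<Longrightarrow> star_position a b c \<le> star_position (Suc a) b (c - 1)"
proof (induction "a + b + c" arbitrary: a b c rule: less_induct)
  case less
  show ?case
  proof (rule game_leI)
    fix x assume "x \<in> set (leftopts (star_position a b c))"
    then consider "x = gzero" | "0 < a" "x = star_position (a - 1) b c"
      | "x = star_position a b (c - 1)"
      by (auto simp: star_position_leftopts)
    then show "\<not> star_position (Suc a) b (c - 1) \<le> x"
    proof cases
      case 1
      then show ?thesis by (simp add: star_position_leftopts not_le_leftopt)
    next
      case 2
      have "star_position a b (c - 1) \<in> set (leftopts (star_position (Suc a) b (c - 1)))"
        by (simp add: star_position_leftopts)
      moreover have "x \<le> star_position a b (c - 1)"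
        using less.hyps[of "a - 1" b c] less.prems 2 by simp
      ultimately show ?thesis by (rule not_game_le_leftoptI)
    next
      case 3
      then show ?thesis by (simp add: star_position_leftopts not_le_leftopt)
    qed
  next
    fix y assume "y \<in> set (rightopts (star_position (Suc a) b (c - 1)))"
    then consider "0 < b" "y = star_position (Suc a) (b - 1) (c - 1)"
      | "1 < c" "y = star_position (Suc a) b (c - 1 - 1)"
      by (auto simp: star_position_rightopts)
    then show "\<not> y \<le> star_position a b c"
    proof cases
      case 1
      have "star_position a (b - 1) c \<in> set (rightopts (star_position a b c))"
        using 1 by (simp add: star_position_rightopts)
      moreover have "star_position a (b - 1) c \<le> y"
        using less.hyps[of a "b - 1" c] less.prems 1 by simp
      ultimately show ?thesis by (rule not_game_le_rightoptI)
    next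
      case 2
      have "star_position a b (c - 1) \<in> set (rightopts (star_position a b c))"
        using less.prems by (simp add: star_position_rightopts)
      moreover have "star_position a b (c - 1) \<le> y"
        using less.hyps[of a b "c - 1"] less.prems 2 by simp
      ultimately show ?thesis by (rule not_game_le_rightoptI)
    qed
  qed
qed

lemma star_position_le_C_star:
  assumes "0 < a" "0 < c"
    and IH: "\<And>b' c'. b' + c' < b + c \<Longrightarrow> 0 < c' \<Longrightarrow>
      star_position a b' c' \<approx> gplus (star_position a b' (c' - 1)) gstar"
  shows "star_position a b c \<le> gplus (star_position a b (c - 1)) gstar"
proof (rule game_leI)
  define X where "X = star_position a b (c - 1)"
  fix x assume "x \<in> set (leftopts (star_position a b c))"
  then have "x \<le> X"
    using assms(1,2) gzero_le_star_position star_position_le_C_to_A[of c "a - 1" b]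
    by (auto simp: star_position_leftopts X_def)
  also have "X \<approx> gplus X gzero" by (rule geqv_sym, rule gplus_gzero)
  finally show "\<not> gplus X gstar \<le> x"
    using gplus_gzero_opt_gplus_gstar(1) by (intro not_game_le_leftoptI)
next
  define X where "X = star_position a b (c - 1)"
  fix y assume "y \<in> set (rightopts (gplus X gstar))"
  then consider g where "g \<in> set (rightopts X)" "y = gplus g gstar" | "y = gplus X gzero"
    by (auto simp: gstar_def)
  then obtain r where "r \<in> set (rightopts (star_position a b c))" "r \<le> y"
  proof cases
    case (1 g)
    then consider "0 < b" "g = star_position a (b - 1) (c - 1)"
      | "1 < c" "g = star_position a b (c - 1 - 1)"
      by (auto simp: X_def star_position_rightopts)
    then show ?thesis
    proof cases
      case 1
      then have "star_position a (b - 1) c \<le> y"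
        using IH[of "b - 1" c] \<open>0 < c\<close> \<open>y = gplus g gstar\<close> geqv_imp_le by simp
      with 1 show ?thesis by (intro that) (simp_all add: star_position_rightopts)
    next
      case 2
      then have "X \<le> y"
        using IH[of b "c - 1"] \<open>y = gplus g gstar\<close> geqv_imp_le by (simp add: X_def)
      with \<open>0 < c\<close> show ?thesis by (intro that) (simp_all add: X_def star_position_rightopts)
    qed
  next
    case 2
    then have "X \<le> y" using gplus_gzero geqv_imp_ge by simp
    with \<open>0 < c\<close> show ?thesis by (intro that) (simp_all add: X_def star_position_rightopts)
  qed
  then show "\<not> y \<le> star_position a b c" by (rule not_game_le_rightoptI)
qed

lemma C_star_le_star_position:
  assumes "0 < a" "0 < c"
    and IH: "\<And>b' c'. b' + c' < b + c \<Longrightarrow> 0 < c' \<Longrightarrow>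
      star_position a b' c' \<approx> gplus (star_position a b' (c' - 1)) gstar"
  shows "gplus (star_position a b (c - 1)) gstar \<le> star_position a b c"
proof (rule game_leI)
  define X where "X = star_position a b (c - 1)"
  have X_left: "X \<in> set (leftopts (star_position a b c))"
    using \<open>0 < c\<close> by (simp add: X_def star_position_leftopts)
  fix x assume "x \<in> set (leftopts (gplus X gstar))"
  then consider g where "g \<in> set (leftopts X)" "x = gplus g gstar" | "x = gplus X gzero"
    by (auto simp: gstar_def)
  then show "\<not> star_position a b c \<le> x"
  proof cases
    case (1 g)
    then consider "g = gzero" | "g = star_position (a - 1) b (c - 1)"
      | "1 < c" "g = star_position a b (c - 1 - 1)"
      using \<open>0 < a\<close> by (auto simp: X_def star_position_leftopts)
    then show ?thesis
    proof cases
      case 1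
      have "x \<approx> gplus gstar gzero" using 1 \<open>x = gplus g gstar\<close> by (simp add: gplus_commute)
      also have "\<dots> \<approx> gstar" by (rule gplus_gzero)
      also have "gstar \<le> X" using \<open>0 < a\<close> by (simp add: X_def gstar_le_star_position)
      finally show ?thesis using X_left by (intro not_game_le_leftoptI)
    next
      case 2
      have "gplus g gzero \<approx> g" by (rule gplus_gzero)
      also have "g \<le> star_position a b c"
        using 2 star_position_le_Suc_Suc[of "a - 1" b "c - 1"] assms(1,2) by simp
      finally have "gplus g gzero \<le> star_position a b c" .
      moreover have "gplus g gzero \<in> set (rightopts x)"
        using \<open>x = gplus g gstar\<close> by (simp add: gstar_def)
      ultimately show ?thesis by (intro not_game_le_rightoptI)
    next
      case 3
      then have "x \<le> X" using IH[of b "c - 1"] \<open>x = gplus g gstar\<close> geqv_imp_ge by (simp add: X_def)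
      with X_left show ?thesis by (intro not_game_le_leftoptI)
    qed
  next
    case 2
    then have "x \<le> X" using gplus_gzero geqv_imp_le by simp
    with X_left show ?thesis by (intro not_game_le_leftoptI)
  qed
next
  define X where "X = star_position a b (c - 1)"
  fix y assume "y \<in> set (rightopts (star_position a b c))"
  then consider "0 < b" "y = star_position a (b - 1) c" | "y = X"
    using \<open>0 < c\<close> by (auto simp: X_def star_position_rightopts)
  then obtain r where "r \<in> set (rightopts (gplus X gstar))" "r \<le> y"
  proof cases
    case 1
    then have "gplus (star_position a (b - 1) (c - 1)) gstar \<le> y"
      using IH[of "b - 1" c] \<open>0 < c\<close> geqv_imp_ge by simp
    with 1 show ?thesis by (intro that) (simp_all add: X_def star_position_rightopts)
  next
    case 2
    then have "gplus X gzero \<le> y" using gplus_gzero geqv_imp_le by simp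
    then show ?thesis using gplus_gzero_opt_gplus_gstar(2) by (intro that)
  qed
  then show "\<not> y \<le> gplus X gstar" by (rule not_game_le_rightoptI)
qed

lemma star_position_C_geqv_star:
  "0 < a \<Longrightarrow> 0 < c \<Longrightarrow> star_position a b c \<approx> gplus (star_position a b (c - 1)) gstar"
proof (induction "b + c" arbitrary: b c rule: less_induct)
  case less
  have IH: "\<And>b' c'. b' + c' < b + c \<Longrightarrow> 0 < c' \<Longrightarrow>
      star_position a b' c' \<approx> gplus (star_position a b' (c' - 1)) gstar"
    using less.hyps less.prems(1) by blast
  show ?case
    unfolding geqv_def
    using star_position_le_C_star[OF less.prems IH] C_star_le_star_position[OF less.prems IH]
    by blast
qed

lemma star_position_C_parity:
  assumes "0 < a"
  shows "star_position a b c
    \<approx> (if even c then star_position a b 0 else gplus (star_position a b 0) gstar)"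
proof (induction c)
  case 0
  show ?case by simp
next
  case (Suc c)
  let ?S = "star_position a b 0"
  have step: "star_position a b (Suc c) \<approx> gplus (star_position a b c) gstar"
    using star_position_C_geqv_star[OF assms, of "Suc c" b] by simp
  show ?case
  proof (cases "even c")
    case True
    have "gplus (star_position a b c) gstar \<approx> gplus ?S gstar"
      using Suc.IH True by (intro gplus_cong) simp_all
    with step have "star_position a b (Suc c) \<approx> gplus ?S gstar" by (rule geqv_trans)
    with True show ?thesis by simp
  next
    case False
    have "gplus (star_position a b c) gstar \<approx> gplus (gplus ?S gstar) gstar"
      using Suc.IH False by (intro gplus_cong) simp_all
    also have "\<dots> \<approx> gplus ?S (gplus gstar gstar)" by (rule gplus_assoc)
    also have "\<dots> \<approx> gplus ?S gzero" using geqv_refl gplus_gstar_gstar by (rule gplus_cong)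
    also have "\<dots> \<approx> ?S" by (rule gplus_gzero)
    finally have "gplus (star_position a b c) gstar \<approx> ?S" .
    with step have "star_position a b (Suc c) \<approx> ?S" by (rule geqv_trans)
    with False show ?thesis by simp
  qed
qed

section \<open>The domination game on a star\<close>

definition leaf_count :: "(nat \<Rightarrow> color) \<Rightarrow> color \<Rightarrow> nat set \<Rightarrow> nat" where
  "leaf_count col X U = card {v \<in> U. col v = X}"

definition star_value :: "(nat \<Rightarrow> color) \<Rightarrow> nat set \<Rightarrow> game" where
  "star_value col U =
     star_position (leaf_count col CA U) (leaf_count col CB U) (leaf_count col CC U)"

lemma leaf_count_remove:
  "finite U \<Longrightarrow> v \<in> U \<Longrightarrow>
     leaf_count col X (U - {v})
       = (if col v = X then leaf_count col X U - 1 else leaf_count col X U)"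
proof -
  assume "finite U" "v \<in> U"
  have "{w \<in> U - {v}. col w = X} = {w \<in> U. col w = X} - {v}" by auto
  then show ?thesis using \<open>finite U\<close> \<open>v \<in> U\<close> by (simp add: leaf_count_def)
qed

lemma leaf_count_pos: "finite U \<Longrightarrow> 0 < leaf_count col X U \<longleftrightarrow> (\<exists>v\<in>U. col v = X)"
  by (auto simp: leaf_count_def card_gt_0_iff)

lemma leaf_count_sum:
  assumes "finite U"
  shows "leaf_count col CA U + leaf_count col CB U + leaf_count col CC U = card U"
proof -
  have "U = {v \<in> U. col v = CA} \<union> {v \<in> U. col v = CB} \<union> {v \<in> U. col v = CC}"
    by (auto intro: color.exhaust)
  then have "card U = card ({v \<in> U. col v = CA} \<union> {v \<in> U. col v = CB} \<union> {v \<in> U. col v = CC})"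
    by simp
  also have "\<dots> = leaf_count col CA U + leaf_count col CB U + leaf_count col CC U"
    using assms unfolding leaf_count_def by (subst card_Un_disjoint; auto)+
  finally show ?thesis by simp
qed

lemma star_value_empty: "star_value col {} = gzero"
  by (simp add: star_value_def leaf_count_def star_position_000)

lemma star_value_remove:
  assumes "finite U" "v \<in> U"
  shows "star_value col (U - {v}) = (case col v of
      CA \<Rightarrow> star_position (leaf_count col CA U - 1) (leaf_count col CB U) (leaf_count col CC U)
    | CB \<Rightarrow> star_position (leaf_count col CA U) (leaf_count col CB U - 1) (leaf_count col CC U)
    | CC \<Rightarrow> star_position (leaf_count col CA U) (leaf_count col CB U) (leaf_count col CC U - 1))"
  using assms by (cases "col v") (simp_all add: star_value_def leaf_count_remove)

lemma mem_star_value_remove_image: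
  fixes col :: "nat \<Rightarrow> color" and P :: "color \<Rightarrow> bool"
  assumes "finite U"
  defines "a \<equiv> leaf_count col CA U" and "b \<equiv> leaf_count col CB U" and "c \<equiv> leaf_count col CC U"
  shows "x \<in> (\<lambda>v. star_value col (U - {v})) ` {v \<in> U. P (col v)} \<longleftrightarrow>
      P CA \<and> 0 < a \<and> x = star_position (a - 1) b c
    \<or> P CB \<and> 0 < b \<and> x = star_position a (b - 1) c
    \<or> P CC \<and> 0 < c \<and> x = star_position a b (c - 1)"
proof
  assume "x \<in> (\<lambda>v. star_value col (U - {v})) ` {v \<in> U. P (col v)}"
  then obtain v where "v \<in> U" "P (col v)" "x = star_value col (U - {v})" by blast
  then show "P CA \<and> 0 < a \<and> x = star_position (a - 1) b c
    \<or> P CB \<and> 0 < b \<and> x = star_position a (b - 1) c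
    \<or> P CC \<and> 0 < c \<and> x = star_position a b (c - 1)"
    using assms leaf_count_pos[OF assms(1), of col "col v"]
    by (cases "col v") (auto simp: star_value_remove)
next
  have witness: "x \<in> (\<lambda>v. star_value col (U - {v})) ` {v \<in> U. P (col v)}"
    if P: "P X" and pos: "0 < leaf_count col X U"
      and val: "\<And>v. v \<in> U \<Longrightarrow> col v = X \<Longrightarrow> x = star_value col (U - {v})" for X
  proof -
    obtain v where "v \<in> U" "col v = X" using pos leaf_count_pos[OF assms(1)] by blast
    then show ?thesis using P val by blast
  qed
  assume "P CA \<and> 0 < a \<and> x = star_position (a - 1) b c
    \<or> P CB \<and> 0 < b \<and> x = star_position a (b - 1) c
    \<or> P CC \<and> 0 < c \<and> x = star_position a b (c - 1)"
  then show "x \<in> (\<lambda>v. star_value col (U - {v})) ` {v \<in> U. P (col v)}"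
  proof (elim disjE conjE)
    assume "P CA" "0 < a" "x = star_position (a - 1) b c"
    then show ?thesis by (intro witness[of CA]) (simp_all add: assms star_value_remove)
  next
    assume "P CB" "0 < b" "x = star_position a (b - 1) c"
    then show ?thesis by (intro witness[of CB]) (simp_all add: assms star_value_remove)
  next
    assume "P CC" "0 < c" "x = star_position a b (c - 1)"
    then show ?thesis by (intro witness[of CC]) (simp_all add: assms star_value_remove)
  qed
qed

lemma empty_iff_leaf_counts_zero:
  "finite U \<Longrightarrow> U = {} \<longleftrightarrow> leaf_count col CA U + leaf_count col CB U + leaf_count col CC U = 0"
  by (simp add: leaf_count_sum)

lemma star_value_leftopts:
  assumes "finite U"
  shows "set (leftopts (star_value col U)) = (if U = {} then {} else
    insert gzero ((\<lambda>v. star_value col (U - {v})) ` {v \<in> U. alice_col (col v)}))"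
proof (rule set_eqI)
  fix x
  show "x \<in> set (leftopts (star_value col U)) \<longleftrightarrow> x \<in> (if U = {} then {} else
    insert gzero ((\<lambda>v. star_value col (U - {v})) ` {v \<in> U. alice_col (col v)}))"
    unfolding if_distrib[of "(\<in>) x"] insert_iff mem_star_value_remove_image[OF assms]
    using empty_iff_leaf_counts_zero[OF assms, of col]
    by (auto simp: star_value_def[of col U] star_position_leftopts alice_col_def)
qed

lemma star_value_rightopts:
  assumes "finite U"
  shows "set (rightopts (star_value col U))
    = (\<lambda>v. star_value col (U - {v})) ` {v \<in> U. bob_col (col v)}"
proof (rule set_eqI)
  fix x
  show "x \<in> set (rightopts (star_value col U))
      \<longleftrightarrow> x \<in> (\<lambda>v. star_value col (U - {v})) ` {v \<in> U. bob_col (col v)}"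
    unfolding mem_star_value_remove_image[OF assms]
    by (auto simp: star_value_def[of col U] star_position_rightopts bob_col_def)
qed

lemma set_leftopts_dgame_aux:
  "finite V \<Longrightarrow> set (leftopts (dgame_aux (Suc k) V E col D)) =
     (\<lambda>v. dgame_aux k V E col (D \<union> cnbhd V E v)) ` {v \<in> V. alice_col (col v) \<and> playable V E D v}"
  by auto

lemma set_rightopts_dgame_aux:
  "finite V \<Longrightarrow> set (rightopts (dgame_aux (Suc k) V E col D)) =
     (\<lambda>v. dgame_aux k V E col (D \<union> cnbhd V E v)) ` {v \<in> V. bob_col (col v) \<and> playable V E D v}"
  by auto

lemma dgame_aux_Suc_cong:
  assumes "finite V"
    and "\<And>v. v \<in> V \<Longrightarrow> playable V E D v \<longleftrightarrow> playable V E D' v"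
    and "\<And>v. v \<in> V \<Longrightarrow> D \<union> cnbhd V E v = D' \<union> cnbhd V E v"
  shows "dgame_aux (Suc k) V E col D = dgame_aux (Suc k) V E col D'"
  using assms by (auto intro!: map_cong filter_cong)

lemma dgame_aux_dominated: "V \<subseteq> D \<Longrightarrow> dgame_aux k V E col D = gzero"
  by (cases k) (auto simp: playable_def cnbhd_def gzero_def filter_empty_conv)

lemma cnbhd_star_centre: "cnbhd V star_edge 0 = V"
  by (auto simp: cnbhd_def star_edge_def)

lemma cnbhd_star_leaf: "0 \<in> V \<Longrightarrow> v \<in> V \<Longrightarrow> v \<noteq> 0 \<Longrightarrow> cnbhd V star_edge v = {0, v}"
  by (auto simp: cnbhd_def star_edge_def)

context
  fixes V D :: "nat set" and col :: "nat \<Rightarrow> color"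
  assumes finite: "finite V" and centre_dominated: "0 \<in> D" and "D \<subseteq> V" and centre_A: "col 0 = CA"
begin

lemma centre_in_V: "0 \<in> V"
  using centre_dominated \<open>D \<subseteq> V\<close> by blast

lemma star_dominate_leaf: "v \<in> V - D \<Longrightarrow> D \<union> cnbhd V star_edge v = insert v D"
  using centre_dominated centre_in_V cnbhd_star_leaf[of V v] by (cases "v = 0") auto

lemma star_playable_iff: "v \<in> V \<Longrightarrow> playable V star_edge D v \<longleftrightarrow> (if v = 0 then V - D \<noteq> {} else v \<notin> D)"
  using \<open>D \<subseteq> V\<close> centre_dominated
  by (auto simp: playable_def cnbhd_star_centre cnbhd_star_leaf)

lemma star_dgame_leftopts:
  "set (leftopts (dgame_aux (Suc k) V star_edge col D)) = (if V - D = {} then {} else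
     insert gzero
       ((\<lambda>v. dgame_aux k V star_edge col (insert v D)) ` {v \<in> V - D. alice_col (col v)}))"
proof -
  have "{v \<in> V. alice_col (col v) \<and> playable V star_edge D v} =
      (if V - D = {} then {} else insert 0 {v \<in> V - D. alice_col (col v)})"
    using star_playable_iff centre_dominated centre_in_V \<open>D \<subseteq> V\<close> centre_A
    by (auto simp: alice_col_def split: if_splits)
  moreover have "dgame_aux k V star_edge col (D \<union> cnbhd V star_edge 0) = gzero"
    by (simp add: cnbhd_star_centre dgame_aux_dominated)
  ultimately show ?thesis
    unfolding set_leftopts_dgame_aux[OF finite]
    by (auto simp: star_dominate_leaf intro!: image_cong)
qed

lemma star_dgame_rightopts:
  "set (rightopts (dgame_aux (Suc k) V star_edge col D)) =
     (\<lambda>v. dgame_aux k V star_edge col (insert v D)) ` {v \<in> V - D. bob_col (col v)}"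
proof -
  have "{v \<in> V. bob_col (col v) \<and> playable V star_edge D v} = {v \<in> V - D. bob_col (col v)}"
    using star_playable_iff centre_dominated \<open>D \<subseteq> V\<close> centre_A
    by (auto simp: bob_col_def split: if_splits)
  then show ?thesis
    unfolding set_rightopts_dgame_aux[OF finite]
    by (auto simp: star_dominate_leaf intro!: image_cong)
qed

end

lemma star_dgame_geqv_star_value:
  assumes "finite V" "0 \<in> D" "D \<subseteq> V" "col 0 = CA" "card (V - D) \<le> k"
  shows "dgame_aux k V star_edge col D \<approx> star_value col (V - D)"
  using assms(2,3,5)
proof (induction k arbitrary: D)
  case 0
  then have "V - D = {}" using assms(1) by simp
  then show ?case unfolding \<open>V - D = {}\<close> star_value_empty by (simp add: gzero_def)
next
  case (Suc k)
  have IH: "dgame_aux k V star_edge col (insert v D) \<approx> star_value col (V - D - {v})"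
    if "v \<in> V - D" for v
  proof -
    have "V - insert v D = V - D - {v}" by blast
    moreover have "card (V - D - {v}) \<le> k" using Suc.prems(3) that assms(1) by simp
    ultimately show ?thesis using Suc.IH[of "insert v D"] Suc.prems(1,2) that by simp
  qed
  have "finite (V - D)" using assms(1) by simp
  show ?case
  proof (rule geqv_optionsI)
    show "rel_set (\<approx>) (set (leftopts (dgame_aux (Suc k) V star_edge col D)))
        (set (leftopts (star_value col (V - D))))"
      unfolding star_dgame_leftopts[of V D col, OF assms(1) Suc.prems(1,2) assms(4)]
        star_value_leftopts[OF \<open>finite (V - D)\<close>]
      using IH by (auto intro!: rel_set_insert rel_set_image empty_transfer)
    show "rel_set (\<approx>) (set (rightopts (dgame_aux (Suc k) V star_edge col D)))
        (set (rightopts (star_value col (V - D))))"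
      unfolding star_dgame_rightopts[of V D col, OF assms(1) Suc.prems(1,2) assms(4)]
        star_value_rightopts[OF \<open>finite (V - D)\<close>]
      using IH by (auto intro!: rel_set_insert rel_set_image)
  qed
qed

lemma star_dom_game_geqv_star_value:
  assumes "finite V" "0 \<in> V" "V \<noteq> {0}" "col 0 = CA"
  shows "dom_game V star_edge col \<approx> star_value col (V - {0})"
proof -
  obtain k where k: "card V = Suc k" using assms(1,2) by (cases "card V") auto
  \<comment> \<open>every first move dominates the centre\<close>
  have "dgame_aux (Suc k) V star_edge col {} = dgame_aux (Suc k) V star_edge col {0}"
  proof (rule dgame_aux_Suc_cong[OF assms(1)])
    fix v assume "v \<in> V"
    have "v \<in> cnbhd V star_edge v" using \<open>v \<in> V\<close> by (simp add: cnbhd_def)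
    moreover have "\<not> cnbhd V star_edge v \<subseteq> {0}"
      using assms(2,3) \<open>v \<in> V\<close> \<open>v \<in> cnbhd V star_edge v\<close> cnbhd_star_centre[of V]
      by (cases "v = 0") auto
    ultimately show "playable V star_edge {} v \<longleftrightarrow> playable V star_edge {0} v"
      by (auto simp: playable_def)
    have "0 \<in> cnbhd V star_edge v" using assms(2) \<open>v \<in> V\<close> by (auto simp: cnbhd_def star_edge_def)
    then show "{} \<union> cnbhd V star_edge v = {0} \<union> cnbhd V star_edge v" by blast
  qed
  also have "\<dots> \<approx> star_value col (V - {0})"
    using assms k by (intro star_dgame_geqv_star_value) (simp_all add: card_Diff1_le)
  finally show ?thesis unfolding dom_game_def k .
qed

lemma dgame_aux_swapAB: "dgame_aux k V E (swapAB \<circ> col) D = gneg (dgame_aux k V E col D)"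
proof -
  have "alice_col (swapAB c) = bob_col c" "bob_col (swapAB c) = alice_col c" for c
    by (cases c; simp add: swapAB_def alice_col_def bob_col_def)+
  then show ?thesis by (induction k arbitrary: D) simp_all
qed

lemma dom_game_swapAB: "dom_game V E (swapAB \<circ> col) = gneg (dom_game V E col)"
  by (simp add: dom_game_def dgame_aux_swapAB)

lemma star_dom_game_interval:
  assumes "col 0 = CA" "0 < n"
  shows "dom_game {0..n} star_edge col \<approx> star_position
    (card {v \<in> {1..n}. col v = CA}) (card {v \<in> {1..n}. col v = CB}) (card {v \<in> {1..n}. col v = CC})"
proof -
  have "{0..n} - {0} = {1..n}" by auto
  moreover have "{0..n} \<noteq> {0}" using assms(2) by auto
  ultimately show ?thesis
    using star_dom_game_geqv_star_value[of "{0..n}" col] assms(1)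
    by (simp add: star_value_def leaf_count_def)
qed

lemma star_dom_game_interval_without_C:
  assumes "col 0 = CA" "0 < card {v \<in> {1..n}. col v = CA}"
  shows "dom_game ({0..n} - {v \<in> {1..n}. col v = CC}) star_edge col
    \<approx> star_position (card {v \<in> {1..n}. col v = CA}) (card {v \<in> {1..n}. col v = CB}) 0"
proof -
  define V where "V = {0..n} - {v \<in> {1..n}. col v = CC}"
  have counts: "{v \<in> V - {0}. col v = CA} = {v \<in> {1..n}. col v = CA}"
    "{v \<in> V - {0}. col v = CB} = {v \<in> {1..n}. col v = CB}"
    "{v \<in> V - {0}. col v = CC} = {}"
    by (auto simp: V_def)
  have "{v \<in> {1..n}. col v = CA} \<noteq> {}" using assms(2) by (metis card.empty less_irrefl)
  then obtain v where "v \<in> {1..n}" "col v = CA" by blast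
  then have "v \<in> V" "v \<noteq> 0" by (simp_all add: V_def)
  then have "V \<noteq> {0}" by blast
  moreover have "finite V" "0 \<in> V" by (simp_all add: V_def)
  ultimately have "dom_game V star_edge col \<approx> star_value col (V - {0})"
    using star_dom_game_geqv_star_value assms(1) by blast
  then show ?thesis unfolding star_value_def leaf_count_def counts V_def[symmetric] by simp
qed

theorem theorem8:
  fixes n a b c :: nat and col :: "nat \<Rightarrow> color"
  assumes leavesA: "card {v \<in> {1..n}. col v = CA} = a"
      and leavesB: "card {v \<in> {1..n}. col v = CB} = b"
      and leavesC: "card {v \<in> {1..n}. col v = CC} = c"
      and cpos: "c \<ge> 1"
  defines "J \<equiv> dom_game ({0..n} - {v \<in> {1..n}. col v = CC}) star_edge col"
  shows "(col 0 = CA \<and> a = 0 \<and> even n \<longrightarrow>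
            dom_game {0..n} star_edge col =\<^sub>g up_times (n - 1))
       \<and> (col 0 = CA \<and> a = 0 \<and> odd n \<longrightarrow>
            dom_game {0..n} star_edge col =\<^sub>g gplus (up_times (n - 1)) gstar)
       \<and> (col 0 = CA \<and> a > 0 \<and> even c \<longrightarrow>
            dom_game {0..n} star_edge col =\<^sub>g J)
       \<and> (col 0 = CA \<and> a > 0 \<and> odd c \<longrightarrow>
            dom_game {0..n} star_edge col =\<^sub>g gplus J gstar)
       \<and> (col 0 = CB \<longrightarrow>
            dom_game {0..n} star_edge col =\<^sub>g gneg (dom_game {0..n} star_edge (swapAB \<circ> col)))"
proof -
  have "0 < n" using leavesC cpos by (cases n) simp_all
  have n: "n = a + b + c"
    using leaf_count_sum[of "{1..n}" col] leavesA leavesB leavesC by (simp add: leaf_count_def)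
  have G: "col 0 = CA \<Longrightarrow> dom_game {0..n} star_edge col \<approx> star_position a b c"
    using star_dom_game_interval \<open>0 < n\<close> leavesA leavesB leavesC by blast
  have J: "col 0 = CA \<Longrightarrow> 0 < a \<Longrightarrow> J \<approx> star_position a b 0"
    unfolding J_def using star_dom_game_interval_without_C leavesA leavesB by blast
  show ?thesis
    unfolding game_eq_iff_geqv
  proof (intro conjI impI)
    assume *: "col 0 = CA \<and> a = 0 \<and> even n"
    then have "b + c = n" using n by simp
    from * have "dom_game {0..n} star_edge col \<approx> star_position 0 b c" using G by simp
    also have "\<dots> \<approx> up_times (n - 1)"
      using star_position_no_A_value[OF \<open>0 < n\<close> \<open>b + c = n\<close>] * by simp
    finally show "dom_game {0..n} star_edge col \<approx> up_times (n - 1)" .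
  next
    assume *: "col 0 = CA \<and> a = 0 \<and> odd n"
    then have "b + c = n" using n by simp
    from * have "dom_game {0..n} star_edge col \<approx> star_position 0 b c" using G by simp
    also have "\<dots> \<approx> gplus (up_times (n - 1)) gstar"
      using star_position_no_A_value[OF \<open>0 < n\<close> \<open>b + c = n\<close>] * by simp
    finally show "dom_game {0..n} star_edge col \<approx> gplus (up_times (n - 1)) gstar" .
  next
    assume *: "col 0 = CA \<and> 0 < a \<and> even c"
    then have "dom_game {0..n} star_edge col \<approx> star_position a b c" using G by simp
    also have "\<dots> \<approx> star_position a b 0" using star_position_C_parity[of a b c] * by simp
    also have "\<dots> \<approx> J" using geqv_sym[OF J] * by simp
    finally show "dom_game {0..n} star_edge col \<approx> J" .
  next
    assume *: "col 0 = CA \<and> 0 < a \<and> odd c"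
    then have "dom_game {0..n} star_edge col \<approx> star_position a b c" using G by simp
    also have "\<dots> \<approx> gplus (star_position a b 0) gstar"
      using star_position_C_parity[of a b c] * by simp
    also have "\<dots> \<approx> gplus J gstar" using gplus_cong[OF geqv_sym[OF J] geqv_refl] * by simp
    finally show "dom_game {0..n} star_edge col \<approx> gplus J gstar" .
  qed (simp add: dom_game_swapAB)
qed

end
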